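(* Let $(\mathcal{X},\kappa)$ be a finite similarity space with Gram matrix $\mathbf{K}$, and assume that the GAIT entropy $\mathbb{P}\mapsto\mathbb{H}^{\mathbf{K}}[\mathbb{P}]$ is concave on the probability simplex over $\mathcal{X}$. Let $\mathcal{Y}$ be a finite set and $(X,Y)$ a random pair with values in $\mathcal{X}\times\mathcal{Y}$. Then $$\mathbb{H}^{\mathbf{K},\mathbf{I}}[X\mid Y]\le\mathbb{H}^{\mathbf{K}}[X].$$
   Context: A finite similarity space $(\mathcal{X},\kappa)$ is a finite set with a symmetric $\kappa:\mathcal{X}\times\mathcal{X}\to[0,1]$ with $\kappa(x,x)=1$; its Gram matrix is $\mathbf{K}_{x,y}=\kappa(x,y)$. For a distribution $\mathbb{P}$ on $\mathcal{X}$, $(\mathbf{K}\mathbb{P})(x)=\sum_y\kappa(x,y)\mathbb{P}(y)$ and the GAIT entropy is $\mathbb{H}^{\mathbf{K}}[\mathbb{P}]=-\sum_x\mathbb{P}(x)\log(\mathbf{K}\mathbb{P})(x)$ (with $0\log0=0$); $\mathbb{H}^{\mathbf{K}}[X]$ is the GAIT entropy of the law of $X$. $\mathbf{I}$ denotes the identity kernel on $\mathcal{Y}$ ($1$ on the diagonal, $0$ elsewhere). For kernels $\kappa$, $\lambda$ with Gram matrices $\mathbf{K},\mathbf{\Lambda}$, $\mathbb{H}^{\mathbf{K}\otimes\mathbf{\Lambda}}[X,Y]$ is the GAIT entropy of the joint law of $(X,Y)$ with respect to the product kernel $\kappa(x,x')\lambda(y,y')$, and $\mathbb{H}^{\mathbf{K},\mathbf{\Lambda}}[X\mid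 Y]=\mathbb{H}^{\mathbf{K}\otimes\mathbf{\Lambda}}[X,Y]-\mathbb{H}^{\mathbf{\Lambda}}[Y]$. *)

theory Defs
  imports Main "HOL-Analysis.Analysis"
begin

definition similarity_kernel :: "('a::finite \<Rightarrow> 'a \<Rightarrow> real) \<Rightarrow> bool" where
  "similarity_kernel k \<longleftrightarrow>
     (\<forall>x y. k x y = k y x) \<and> (\<forall>x y. 0 \<le> k x y \<and> k x y \<le> 1) \<and> (\<forall>x. k x x = 1)"

definition prob_dist :: "('a::finite \<Rightarrow> real) \<Rightarrow> bool" where
  "prob_dist P \<longleftrightarrow> (\<forall>x. 0 \<le> P x) \<and> (\<Sum>x\<in>UNIV. P x) = 1"

definition kernel_apply :: "('a::finite \<Rightarrow> 'a \<Rightarrow> real) \<Rightarrow> ('a \<Rightarrow> real) \<Rightarrow> 'a \<Rightarrow> real" where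
  "kernel_apply k P x = (\<Sum>y\<in>UNIV. k x y * P y)"

(* GAIT entropy; note 0 * ln _ = 0 realizes the convention 0 log 0 = 0 *)
definition gait_entropy :: "('a::finite \<Rightarrow> 'a \<Rightarrow> real) \<Rightarrow> ('a \<Rightarrow> real) \<Rightarrow> real" where
  "gait_entropy k P = - (\<Sum>x\<in>UNIV. P x * ln (kernel_apply k P x))"

definition id_kernel :: "'a \<Rightarrow> 'a \<Rightarrow> real" where
  "id_kernel y y' = (if y = y' then 1 else 0)"

definition prod_kernel :: "('a \<Rightarrow> 'a \<Rightarrow> real) \<Rightarrow> ('b \<Rightarrow> 'b \<Rightarrow> real)
    \<Rightarrow> ('a \<times> 'b) \<Rightarrow> ('a \<times> 'b) \<Rightarrow> real" where
  "prod_kernel k l p q = k (fst p) (fst q) * l (snd p) (snd q)"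

definition marg1 :: "('a \<times> 'b::finite \<Rightarrow> real) \<Rightarrow> 'a \<Rightarrow> real" where
  "marg1 Q x = (\<Sum>y\<in>UNIV. Q (x, y))"

definition marg2 :: "('a::finite \<times> 'b \<Rightarrow> real) \<Rightarrow> 'b \<Rightarrow> real" where
  "marg2 Q y = (\<Sum>x\<in>UNIV. Q (x, y))"

(* H^{K,Lambda}[X|Y] = H^{K (x) Lambda}[X,Y] - H^Lambda[Y], for joint law Q of (X,Y) *)
definition gait_cond_entropy ::
  "('a::finite \<Rightarrow> 'a \<Rightarrow> real) \<Rightarrow> ('b::finite \<Rightarrow> 'b \<Rightarrow> real) \<Rightarrow> ('a \<times> 'b \<Rightarrow> real) \<Rightarrow> real" where
  "gait_cond_entropy k l Q = gait_entropy (prod_kernel k l) Q - gait_entropy l (marg2 Q)"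

definition gait_concave :: "('a::finite \<Rightarrow> 'a \<Rightarrow> real) \<Rightarrow> bool" where
  "gait_concave k \<longleftrightarrow>
     (\<forall>P Q t. prob_dist P \<longrightarrow> prob_dist Q \<longrightarrow> 0 \<le> t \<longrightarrow> t \<le> 1 \<longrightarrow>
        t * gait_entropy k P + (1 - t) * gait_entropy k Q
          \<le> gait_entropy k (\<lambda>x. t * P x + (1 - t) * Q x))"

end

(* For the kernel K (x) I the Gram matrix is block diagonal in y, so the joint GAIT entropy is
   the sum over y of the entropies of the unnormalised slices Q(., y), while H^I is the Shannon
   entropy of the marginal q of Y. The scaling law  q * H(f / q) = H(f) + q ln q  turns the
   conditional entropy into the average  sum_y q(y) H^K[P(X | Y = y)].  Concavity of H^K
   (Jensen) bounds this average by the entropy of the mixture  sum_y q(y) P(X | Y = y),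
   which is the law of X. *)

theory Submission
  imports Defs
begin

(* Functions are not a real_vector in HOL-Analysis, so the simplex is embedded into real ^ 'a
   in order to use the library's Jensen inequality concave_on_sum. *)

lemma convex_prob_simplex: "convex {v :: real ^ 'a::finite. prob_dist (vec_nth v)}"
  unfolding convex_def prob_dist_def
  by (auto simp: sum.distrib simp flip: sum_distrib_left)

lemma concave_on_gait_entropy:
  fixes k :: "'a::finite \<Rightarrow> 'a \<Rightarrow> real"
  assumes "gait_concave k"
  shows "concave_on {v. prob_dist (vec_nth v)} (\<lambda>v. gait_entropy k (vec_nth v))"
  unfolding concave_on_iff
proof (intro conjI convex_prob_simplex ballI allI impI)
  fix x y :: "real ^ 'a" and u v :: real
  assume "x \<in> {v. prob_dist (vec_nth v)}" "y \<in> {v. prob_dist (vec_nth v)}"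
    and "0 \<le> u" "0 \<le> v" "u + v = 1"
  moreover have "vec_nth (u *\<^sub>R x + v *\<^sub>R y) = (\<lambda>i. u * x $ i + (1 - u) * y $ i)"
    using \<open>u + v = 1\<close> by (auto simp: fun_eq_iff)
  ultimately show "u * gait_entropy k (vec_nth x) + v * gait_entropy k (vec_nth y)
      \<le> gait_entropy k (vec_nth (u *\<^sub>R x + v *\<^sub>R y))"
    using assms unfolding gait_concave_def by (simp add: eq_diff_eq[symmetric] add.commute)
qed

lemma gait_entropy_mixture_ge:
  fixes k :: "'a::finite \<Rightarrow> 'a \<Rightarrow> real" and P :: "'i \<Rightarrow> 'a \<Rightarrow> real"
  assumes "gait_concave k" and "finite S" and "(\<Sum>i\<in>S. w i) = 1"
    and "\<And>i. i \<in> S \<Longrightarrow> 0 \<le> w i"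
    and "\<And>i. i \<in> S \<Longrightarrow> w i \<noteq> 0 \<Longrightarrow> prob_dist (P i)"
    \<comment> \<open>components of weight zero are unconstrained: conditionals given a null event are 0/0 junk\<close>
  shows "(\<Sum>i\<in>S. w i * gait_entropy k (P i)) \<le> gait_entropy k (\<lambda>x. \<Sum>i\<in>S. w i * P i x)"
proof -
  define S' where "S' = {i \<in> S. w i \<noteq> 0}"
  have restrict: "(\<Sum>i\<in>S. w i * f i) = (\<Sum>i\<in>S'. w i * f i)" for f :: "'i \<Rightarrow> real"
    unfolding S'_def using assms(2) by (intro sum.mono_neutral_right) auto
  have "(\<Sum>i\<in>S'. w i) = 1"
    using restrict[of "\<lambda>_. 1"] assms(3) by simp
  then have "S' \<noteq> {}" by auto
  have "(\<Sum>i\<in>S'. w i * gait_entropy k (vec_nth (vec_lambda (P i))))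
      \<le> gait_entropy k (vec_nth (\<Sum>i\<in>S'. w i *\<^sub>R vec_lambda (P i)))"
    using assms \<open>(\<Sum>i\<in>S'. w i) = 1\<close>
    by (intro concave_on_sum[OF _ \<open>S' \<noteq> {}\<close> concave_on_gait_entropy])
      (auto simp: S'_def vec_lambda_inverse)
  moreover have "vec_nth (\<Sum>i\<in>S'. w i *\<^sub>R vec_lambda (P i)) = (\<lambda>x. \<Sum>i\<in>S'. w i * P i x)"
    by (simp add: fun_eq_iff sum_component)
  ultimately show ?thesis
    by (simp add: restrict vec_lambda_inverse)
qed

lemma sum_UNIV_prod:
  fixes f :: "'a::finite \<times> 'b::finite \<Rightarrow> 'c::comm_monoid_add"
  shows "(\<Sum>p\<in>UNIV. f p) = (\<Sum>x\<in>UNIV. \<Sum>y\<in>UNIV. f (x, y))"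
  by (simp flip: UNIV_Times_UNIV add: sum.cartesian_product)

lemma kernel_apply_id_kernel: "kernel_apply id_kernel f = f"
  by (simp add: fun_eq_iff kernel_apply_def id_kernel_def if_distrib[of "\<lambda>t. t * _"] cong: if_cong)

lemma kernel_apply_prod_id_kernel:
  "kernel_apply (prod_kernel k id_kernel) Q (x, y) = kernel_apply k (\<lambda>x'. Q (x', y)) x"
  by (simp add: kernel_apply_def prod_kernel_def id_kernel_def sum_UNIV_prod
      if_distrib[of "\<lambda>t. _ * t * _"] cong: if_cong)

lemma gait_entropy_prod_id_kernel:
  "gait_entropy (prod_kernel k id_kernel) Q = (\<Sum>y\<in>UNIV. gait_entropy k (\<lambda>x. Q (x, y)))"
  unfolding gait_entropy_def sum_UNIV_prod kernel_apply_prod_id_kernel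
  by (subst sum.swap) (simp add: sum_negf)

lemma gait_entropy_id_kernel: "gait_entropy id_kernel q = - (\<Sum>y\<in>UNIV. q y * ln (q y))"
  by (simp add: gait_entropy_def kernel_apply_id_kernel)

lemma kernel_apply_pos:
  assumes "similarity_kernel k" and "\<And>x. 0 \<le> f x" and "0 < f x"
  shows "0 < kernel_apply k f x"
proof -
  have "f x = k x x * f x"
    using assms(1) by (simp add: similarity_kernel_def)
  also have "\<dots> \<le> kernel_apply k f x"
    unfolding kernel_apply_def using assms(1,2)
    by (intro member_le_sum) (auto simp: similarity_kernel_def)
  finally show ?thesis using assms(3) by simp
qed

lemma gait_entropy_normalize:
  assumes "similarity_kernel k" and "\<And>x. 0 \<le> f x"
  defines "s \<equiv> \<Sum>x\<in>UNIV. f x"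
  shows "s * gait_entropy k (\<lambda>x. f x / s) = gait_entropy k f + s * ln s"
proof (cases "s = 0")
  case True
  then have "f = (\<lambda>_. 0)"
    using assms(2) by (simp add: s_def fun_eq_iff sum_nonneg_eq_0_iff)
  then show ?thesis using True by (simp add: gait_entropy_def)
next
  case False
  then have "0 < s"
    using assms(2) by (simp add: s_def order_less_le sum_nonneg)
  have "f x * ln (kernel_apply k (\<lambda>x. f x / s) x) = f x * ln (kernel_apply k f x) - f x * ln s" for x
  proof (cases "f x = 0")
    case False
    then have "0 < kernel_apply k f x"
      using assms(1,2) kernel_apply_pos[of k f x] by (simp add: order_less_le)
    then show ?thesis
      using \<open>0 < s\<close> by (simp add: kernel_apply_def ln_div algebra_simps flip: sum_divide_distrib)
  qed simp
  then show ?thesis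
    using \<open>0 < s\<close>
    by (simp add: gait_entropy_def sum_distrib_left sum_subtractf s_def flip: sum_distrib_right)
qed

lemma gait_cond_entropy_id_kernel:
  assumes "similarity_kernel k" and "\<And>z. 0 \<le> Q z"
  shows "gait_cond_entropy k id_kernel Q
    = (\<Sum>y\<in>UNIV. marg2 Q y * gait_entropy k (\<lambda>x. Q (x, y) / marg2 Q y))"
  using gait_entropy_normalize[OF assms(1), of "\<lambda>x. Q (x, _)"] assms(2)
  by (simp add: gait_cond_entropy_def gait_entropy_prod_id_kernel gait_entropy_id_kernel
      marg2_def sum.distrib)

lemma prob_dist_marg2:
  assumes "prob_dist Q"
  shows "prob_dist (marg2 Q)"
proof -
  have "(\<Sum>y\<in>UNIV. marg2 Q y) = (\<Sum>p\<in>UNIV. Q p)"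
    unfolding marg2_def sum_UNIV_prod by (rule sum.swap)
  then show ?thesis
    using assms by (simp add: prob_dist_def marg2_def sum_nonneg)
qed

lemma prob_dist_normalize:
  assumes "\<And>x. 0 \<le> f x" and "(\<Sum>x\<in>UNIV. f x) \<noteq> 0"
  shows "prob_dist (\<lambda>x. f x / (\<Sum>x\<in>UNIV. f x))"
  using assms by (simp add: prob_dist_def sum_nonneg flip: sum_divide_distrib)

lemma marg1_eq_mixture:
  assumes "\<And>z. 0 \<le> Q z"
  shows "marg1 Q = (\<lambda>x. \<Sum>y\<in>UNIV. marg2 Q y * (Q (x, y) / marg2 Q y))"
proof -
  have "Q (x, y) = 0" if "marg2 Q y = 0" for x y
    using that assms by (simp add: marg2_def sum_nonneg_eq_0_iff)
  then show ?thesis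
    by (auto simp: fun_eq_iff marg1_def intro!: sum.cong)
qed

theorem theorem5:
  fixes k :: "'x::finite \<Rightarrow> 'x \<Rightarrow> real"
    and Q :: "'x \<times> 'y::finite \<Rightarrow> real"
  assumes "similarity_kernel k"
    and "gait_concave k"
    and "prob_dist Q"
  shows "gait_cond_entropy k id_kernel Q \<le> gait_entropy k (marg1 Q)"
proof -
  have Q_nonneg: "\<And>z. 0 \<le> Q z" and "prob_dist (marg2 Q)"
    using assms(3) prob_dist_marg2 by (auto simp: prob_dist_def)
  have "gait_cond_entropy k id_kernel Q
      = (\<Sum>y\<in>UNIV. marg2 Q y * gait_entropy k (\<lambda>x. Q (x, y) / marg2 Q y))"
    using assms(1) Q_nonneg by (rule gait_cond_entropy_id_kernel)
  also have "\<dots> \<le> gait_entropy k (\<lambda>x. \<Sum>y\<in>UNIV. marg2 Q y * (Q (x, y) / marg2 Q y))"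
  proof (rule gait_entropy_mixture_ge[OF assms(2)])
    show "prob_dist (\<lambda>x. Q (x, y) / marg2 Q y)" if "marg2 Q y \<noteq> 0" for y
      using prob_dist_normalize[of "\<lambda>x. Q (x, y)"] Q_nonneg that by (simp add: marg2_def)
  qed (use \<open>prob_dist (marg2 Q)\<close> in \<open>auto simp: prob_dist_def\<close>)
  also have "\<dots> = gait_entropy k (marg1 Q)"
    by (simp add: marg1_eq_mixture[OF Q_nonneg])
  finally show ?thesis .
qed

end
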